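(* Let $G$ be a connected Lie group whose Lie algebra $\mathfrak{g}$ is a subalgebra of $\mathfrak{gl}(q,\mathbb{C})$, and let $\|\cdot\|$ be a Banach algebra norm on $\mathfrak{gl}(q,\mathbb{C})$. Let $g(z)=\frac{z}{1-e^{-z}}$ and let $B_1,B_2$ be constants with $|g(z)|\leq B_1$, $|g'(z)|\leq B_2$ on $\{z\in\mathbb{C}:|z|\leq\pi\}$. Let $\|\mathrm{ad}\|=\sup\{\|\mathrm{ad}(A_1)A_2\|:\|A_1\|=\|A_2\|=1\}$. For a continuous curve $A:[0,T]\to\mathfrak{g}$ let $a$ solve $\dot a(t)=A(t)\cdot a(t)$, $a(0)=1$, and let $Q(t)=\exp^{-1}a(t)$ denote the continuous curve in $\mathfrak{g}$ with $Q(0)=0$ and $\exp Q(t)=a(t)$, assumed well defined. Then there exists $\varepsilon>0$ such that for every such $A$ and $t$ with $t\|A\|_{L^\infty[0,t]}<\varepsilon$, $$\Big\|Q(t)-\int_0^tA(s)\,ds\Big\|\leq\frac{\|\mathrm{ad}\|\,t^2B_2^2}{1-\|\mathrm{ad}\|B_2\varepsilon}\|A\|^2_{L^\infty[0,t]}.$$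
   Context: $\|A\|_{L^\infty[0,t]}=\sup_{s\in[0,t]}\|A(s)\|$. Where defined, $Q$ satisfies $\dot Q(t)=g(\mathrm{ad}\,Q(t))A(t)$, $Q(0)=0$. *)

theory Defs
  imports "HOL-Analysis.Analysis"
begin

type_synonym 'q cmat = "complex^'q^'q"

definition cscale :: "complex \<Rightarrow> 'q::finite cmat \<Rightarrow> 'q cmat" where
  "cscale c M = (\<chi> i j. c * M $ i $ j)"

fun mpow :: "'q::finite cmat \<Rightarrow> nat \<Rightarrow> 'q cmat" where
  "mpow M 0 = mat 1"
| "mpow M (Suc n) = M ** mpow M n"

definition mexp :: "'q::finite cmat \<Rightarrow> 'q cmat" where
  "mexp M = (\<Sum>n. (1 / fact n) *\<^sub>R mpow M n)"

definition mbracket :: "'q::finite cmat \<Rightarrow> 'q cmat \<Rightarrow> 'q cmat" where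
  "mbracket X Y = X ** Y - Y ** X"

definition lie_subalgebra :: "'q::finite cmat set \<Rightarrow> bool" where
  "lie_subalgebra L \<longleftrightarrow> subspace L \<and> (\<forall>X\<in>L. \<forall>Y\<in>L. mbracket X Y \<in> L)"

text \<open>A Banach algebra norm on gl(q,C) (completeness is automatic in finite dimension).\<close>
definition banach_algebra_norm :: "('q::finite cmat \<Rightarrow> real) \<Rightarrow> bool" where
  "banach_algebra_norm N \<longleftrightarrow>
     (\<forall>X. 0 \<le> N X) \<and> (\<forall>X. N X = 0 \<longleftrightarrow> X = 0) \<and>
     (\<forall>c X. N (cscale c X) = cmod c * N X) \<and>
     (\<forall>X Y. N (X + Y) \<le> N X + N Y) \<and>
     (\<forall>X Y. N (X ** Y) \<le> N X * N Y)"

text \<open>The function g(z) = z/(1 - e^{-z}), extended by its limit 1 at z = 0.\<close>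
definition gfun :: "complex \<Rightarrow> complex" where
  "gfun z = (if z = 0 then 1 else z / (1 - exp (- z)))"

definition ad_norm :: "('q::finite cmat \<Rightarrow> real) \<Rightarrow> real" where
  "ad_norm N = Sup {N (mbracket X Y) | X Y. N X = 1 \<and> N Y = 1}"

definition Linf :: "('q::finite cmat \<Rightarrow> real) \<Rightarrow> (real \<Rightarrow> 'q cmat) \<Rightarrow> real \<Rightarrow> real" where
  "Linf N A t = (SUP s\<in>{0..t}. N (A s))"

end

(*
  Let P(t) be the integral of A over [0, t] and p = t * sup |A|.  Differentiating the partial sums
  of exp P(t) and moving A(t) to the front of each power of P(t) costs only commutators
  [P(t), A(t)], of size at most |ad| * p * |A|; a Gronwall-type argument then gives
  |a(t) - exp P(t)| = O(|ad| p^2).  Near 0, exp is injective with Lipschitz inverse, so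
  |Q(t) - P(t)| <= 3/10 |ad| p^2 whenever |Q(t)| <= 1/20, and a continuity argument shows that
  Q(t) cannot leave this ball while p <= 1/100.  Finally 3/10 <= B2^2, because |g'(pi)| >= 11/20,
  so eps = 1 / (100 (1 + B2)) works.
*)

theory Submission
  imports Defs
begin

lemma matrix_add_rdistrib: "((A::'a::semiring_1^'n^'m) + B) ** C = A ** C + B ** C"
  by (vector matrix_matrix_mult_def sum.distrib[symmetric] field_simps)

lemma matrix_diff_rdistrib: "((A::'a::ring_1^'n^'m) - B) ** C = A ** C - B ** C"
  by (vector matrix_matrix_mult_def sum_subtractf[symmetric] field_simps)

lemma matrix_diff_ldistrib: "(C::'a::ring_1^'n^'m) ** (A - B) = C ** A - C ** B"
  by (vector matrix_matrix_mult_def sum_subtractf[symmetric] field_simps)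

lemma matrix_mul_sum_right: "(A::'a::semiring_1^'n^'m) ** sum f S = (\<Sum>i\<in>S. A ** f i)"
  by (induction S rule: infinite_finite_induct) (auto simp: matrix_add_ldistrib)

lemma matrix_scaleR_mul_left: "(c *\<^sub>R (A::'q::finite cmat)) ** B = c *\<^sub>R (A ** B)"
  by (simp add: scalar_matrix_assoc)

lemma matrix_scaleR_mul_right: "(A::'q::finite cmat) ** (c *\<^sub>R B) = c *\<^sub>R (A ** B)"
  by (simp add: matrix_scalar_ac scalar_matrix_assoc)

lemma bounded_bilinear_matrix_mul: "bounded_bilinear (\<lambda>(A::'q::finite cmat) B. A ** B)"
proof -
  have "bilinear (\<lambda>(A::'q::finite cmat) B. A ** B)"
    unfolding bilinear_def
    by (auto intro!: linearI simp: matrix_add_ldistrib matrix_add_rdistrib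
        matrix_scaleR_mul_left matrix_scaleR_mul_right)
  then show ?thesis using bilinear_conv_bounded_bilinear by blast
qed

lemma scaleR_eq_cscale: "c *\<^sub>R (X::'q::finite cmat) = cscale (complex_of_real c) X"
  by (simp add: cscale_def vec_eq_iff) (simp add: scaleR_conv_of_real)

lemma numeral_mult_cmat: "numeral k * (M::'q::finite cmat) = numeral k *\<^sub>R M"
  by (simp add: vec_eq_iff) (simp add: scaleR_conv_of_real)

lemma mat_1_neq_0: "(mat 1 :: 'a::zero_neq_one^'n^'n) \<noteq> 0"
proof
  assume "(mat 1 :: 'a^'n^'n) = 0"
  then have "(mat 1 :: 'a^'n^'n) $ undefined $ undefined = 0" by simp
  then show False by (simp add: mat_def)
qed

definition mexp_partial :: "'q::finite cmat \<Rightarrow> nat \<Rightarrow> 'q cmat" where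
  "mexp_partial X n = (\<Sum>k<n. (1 / fact k) *\<^sub>R mpow X k)"

lemma exp_sums_real: "(\<lambda>n. x ^ n / fact n) sums exp (x::real)"
  using exp_converges[of x] by (simp add: divide_inverse_commute)

lemma sum_power_fact_le_exp: "0 \<le> (x::real) \<Longrightarrow> (\<Sum>k<n. x ^ k / fact k) \<le> exp x"
  using exp_sums_real[of x] by (intro sum_le_suminf[of "\<lambda>k. x ^ k / fact k",
      unfolded sums_unique[OF exp_sums_real, symmetric]]) (auto simp: sums_summable)

locale algebra_norm =
  fixes N :: "'q::finite cmat \<Rightarrow> real"
  assumes banach_algebra_norm: "banach_algebra_norm N"
begin

lemma N_ge_zero: "0 \<le> N X"
  using banach_algebra_norm by (simp add: banach_algebra_norm_def)

lemma N_eq_zero_iff: "N X = 0 \<longleftrightarrow> X = 0"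
  using banach_algebra_norm by (simp add: banach_algebra_norm_def)

lemma N_zero [simp]: "N 0 = 0"
  by (simp add: N_eq_zero_iff)

lemma N_pos: "X \<noteq> 0 \<Longrightarrow> 0 < N X"
  using N_eq_zero_iff N_ge_zero by (metis order_le_less)

lemma N_triangle_ineq: "N (X + Y) \<le> N X + N Y"
  using banach_algebra_norm by (simp add: banach_algebra_norm_def)

lemma N_mult_ineq: "N (X ** Y) \<le> N X * N Y"
  using banach_algebra_norm by (simp add: banach_algebra_norm_def)

lemma N_scaleR: "N (c *\<^sub>R X) = \<bar>c\<bar> * N X"
  using banach_algebra_norm by (simp add: banach_algebra_norm_def scaleR_eq_cscale)

lemma N_minus_cancel: "N (- X) = N X"
  using N_scaleR[of "-1" X] by simp

lemma N_diff_triangle_ineq: "N (X - Y) \<le> N X + N Y"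
  using N_triangle_ineq[of X "-Y"] N_minus_cancel[of Y] by simp

lemma N_triangle_ineq2: "N X - N Y \<le> N (X - Y)"
  using N_triangle_ineq[of "X - Y" Y] by simp

lemma N_sum_le: "N (sum f S) \<le> (\<Sum>i\<in>S. N (f i))"
  by (induction S rule: infinite_finite_induct) (auto intro: order_trans[OF N_triangle_ineq])

lemma N_continuous_on: "continuous_on UNIV N"
proof -
  have "convex_on UNIV N"
  proof (rule convex_onI)
    fix t :: real and x y assume "0 < t" "t < 1"
    then show "N ((1 - t) *\<^sub>R x + t *\<^sub>R y) \<le> (1 - t) * N x + t * N y"
      using N_triangle_ineq[of "(1 - t) *\<^sub>R x" "t *\<^sub>R y"] by (simp add: N_scaleR)
  qed auto
  then show ?thesis by (rule convex_on_continuous[OF open_UNIV])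
qed

lemma N_dominates_norm: "\<exists>C>0. \<forall>X. norm X \<le> C * N X"
proof -
  have "continuous_on (sphere 0 1) N" using N_continuous_on continuous_on_subset by blast
  then obtain X0 where X0: "X0 \<in> sphere 0 1" "\<forall>Y\<in>sphere 0 1. N X0 \<le> N Y"
    using continuous_attains_inf[of "sphere (0::'q cmat) 1" N] by auto
  then have N0: "0 < N X0" by (intro N_pos) auto
  have "norm X \<le> (1 / N X0) * N X" for X
  proof (cases "X = 0")
    case False
    then have "N X0 \<le> N ((1 / norm X) *\<^sub>R X)" using X0 by simp
    then show ?thesis using N0 False by (simp add: N_scaleR field_simps)
  qed simp
  then show ?thesis using N0 by (intro exI[of _ "1 / N X0"]) auto
qed

text \<open>\<open>N\<close> is not the norm of the type, so the library's estimates for \<open>norm\<close> do not apply;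
  a norming functional, obtained by separating \<open>X / N X\<close> from the open unit ball of \<open>N\<close>,
  reduces the estimates below to scalar ones.\<close>

lemma N_norming_functional: "\<exists>a. (\<forall>Y. inner a Y \<le> N Y) \<and> inner a X = N X"
proof (cases "X = 0")
  case True then show ?thesis by (intro exI[of _ 0]) (simp add: N_ge_zero)
next
  case False
  define X1 where "X1 = (1 / N X) *\<^sub>R X"
  have NX1: "N X1 = 1" using N_pos[OF False] by (simp add: X1_def N_scaleR)
  have "convex {Y. N Y < 1}"
  proof (rule convexI)
    fix x y and u v :: real assume "x \<in> {Y. N Y < 1}" "y \<in> {Y. N Y < 1}" "0 \<le> u" "0 \<le> v" "u + v = 1"
    then show "u *\<^sub>R x + v *\<^sub>R y \<in> {Y. N Y < 1}"
      using N_triangle_ineq[of "u *\<^sub>R x" "v *\<^sub>R y"] convex_bound_lt[of "N x" 1 "N y" u v]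
      by (simp add: N_scaleR)
  qed
  moreover have "{Y. N Y < 1} \<inter> {X1} = {}" using NX1 by auto
  ultimately obtain a b where ab: "a \<noteq> 0" "\<forall>Y. N Y < 1 \<longrightarrow> inner a Y \<le> b" "b \<le> inner a X1"
    using separating_hyperplane_sets[of "{Y. N Y < 1}" "{X1}"] by force
  have le: "inner a Y \<le> b * N Y" for Y
  proof (cases "Y = 0")
    case True then show ?thesis using ab(2) by force
  next
    case False
    show ?thesis
    proof (rule field_le_mult_one_interval)
      fix z :: real assume z: "0 < z" "z < 1"
      have "N ((z / N Y) *\<^sub>R Y) < 1" using z N_pos[OF False] by (simp add: N_scaleR)
      then have "(z / N Y) * inner a Y \<le> b" using ab(2) by auto
      then show "z * inner a Y \<le> b * N Y" using N_pos[OF False] by (simp add: field_simps)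
    qed
  qed
  have "0 < b"
  proof (rule ccontr)
    assume "\<not> 0 < b"
    then have "inner a a \<le> 0" using le[of a] mult_nonpos_nonneg[of b "N a"] N_ge_zero[of a] by simp
    then show False using ab(1) inner_gt_zero_iff[of a] by linarith
  qed
  have "inner ((1 / b) *\<^sub>R a) Y \<le> N Y" for Y using le[of Y] \<open>0 < b\<close> by (simp add: field_simps)
  moreover have "N X \<le> inner ((1 / b) *\<^sub>R a) X"
    using ab(3) \<open>0 < b\<close> N_pos[OF False] by (simp add: X1_def field_simps)
  ultimately show ?thesis by (intro exI[of _ "(1 / b) *\<^sub>R a"]) (simp add: order_antisym)
qed

lemma N_suminf_le:
  assumes "summable f" "\<And>n. N (f n) \<le> b n" "summable b"
  shows "N (suminf f) \<le> suminf b"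
proof -
  obtain a where a: "\<forall>Y. inner a Y \<le> N Y" "inner a (suminf f) = N (suminf f)"
    using N_norming_functional by blast
  have "inner a (suminf f) = (\<Sum>n. inner a (f n))"
    using bounded_linear.suminf[OF bounded_linear_inner_right assms(1)] by simp
  also have "\<dots> \<le> suminf b"
    using bounded_linear.summable[OF bounded_linear_inner_right assms(1)] assms(2,3) a(1)
    by (intro suminf_le) (auto intro: order_trans)
  finally show ?thesis using a(2) by simp
qed

lemma N_increment_le:
  fixes f :: "real \<Rightarrow> 'q cmat"
  assumes "0 \<le> u"
    and f: "\<And>v. v \<in> {0..u} \<Longrightarrow> (f has_vector_derivative f' v) (at v within {0..u})"
    and G: "\<And>v. v \<in> {0..u} \<Longrightarrow> (G has_real_derivative G' v) (at v within {0..u})"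
    and le: "\<And>v. v \<in> {0..u} \<Longrightarrow> N (f' v) \<le> G' v"
  shows "N (f u - f 0) \<le> G u - G 0"
proof -
  obtain a where a: "\<forall>Y. inner a Y \<le> N Y" "inner a (f u - f 0) = N (f u - f 0)"
    using N_norming_functional by blast
  define h where "h v = inner a (f v) - G v" for v
  have "(h has_derivative (*) (inner a (f' v) - G' v)) (at v within {0..u})" if "v \<in> {0..u}" for v
  proof -
    have "((\<lambda>v. inner a (f v)) has_real_derivative inner a (f' v)) (at v within {0..u})"
      using bounded_linear.has_vector_derivative[OF bounded_linear_inner_right f[OF that]]
      by (simp add: has_real_derivative_iff_has_vector_derivative)
    then show ?thesis
      unfolding h_def using G[OF that] DERIV_diff by (fastforce simp: has_field_derivative_def)
  qed
  then obtain v where "v \<in> {0..u}" "h u - h 0 = (inner a (f' v) - G' v) * u"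
    using mvt_very_simple[OF \<open>0 \<le> u\<close>, of h "\<lambda>v. (*) (inner a (f' v) - G' v)"] by auto
  moreover from this have "inner a (f' v) \<le> G' v" using a(1) le by (meson order_trans)
  ultimately have "h u - h 0 \<le> 0" using \<open>0 \<le> u\<close> by (simp add: mult_nonpos_nonneg)
  then show ?thesis using a(2) by (simp add: h_def inner_diff_right)
qed

lemma N_mpow_mult_le: "N (mpow X n ** Y) \<le> N X ^ n * N Y"
proof (induction n arbitrary: Y)
  case (Suc n)
  have "N (mpow X (Suc n) ** Y) \<le> N X * N (mpow X n ** Y)"
    using N_mult_ineq by (simp add: matrix_mul_assoc[symmetric])
  also have "\<dots> \<le> N X * (N X ^ n * N Y)" using Suc N_ge_zero by (simp add: mult_left_mono)
  finally show ?case by (simp add: mult_ac)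
qed simp

lemma N_mult_mpow_le: "N (Y ** mpow X n) \<le> N Y * N X ^ n"
proof (induction n arbitrary: Y)
  case (Suc n)
  have "N (Y ** mpow X (Suc n)) \<le> N (Y ** X) * N X ^ n"
    using Suc[of "Y ** X"] by (simp add: matrix_mul_assoc)
  also have "\<dots> \<le> N Y * N X * N X ^ n" by (intro mult_right_mono N_mult_ineq) (simp add: N_ge_zero)
  finally show ?case by (simp add: mult_ac)
qed simp

lemma N_mpow_le: "N (mpow X n) \<le> N (mat 1) * N X ^ n"
  using N_mpow_mult_le[of X n "mat 1"] by (simp add: mult_ac)

lemma N_mpow_diff_le:
  fixes r :: real
  assumes "N X \<le> r" "N Y \<le> r"
  shows "N (mpow X (Suc k) - mpow Y (Suc k)) \<le> Suc k * r ^ k * N (X - Y)"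
proof (induction k)
  case (Suc k)
  have eq: "mpow X (Suc (Suc k)) - mpow Y (Suc (Suc k)) =
      X ** (mpow X (Suc k) - mpow Y (Suc k)) + (X - Y) ** mpow Y (Suc k)"
    by (simp add: matrix_diff_ldistrib matrix_diff_rdistrib)
  have "N (mpow X (Suc (Suc k)) - mpow Y (Suc (Suc k))) \<le>
      N X * N (mpow X (Suc k) - mpow Y (Suc k)) + N (X - Y) * N Y ^ Suc k"
    unfolding eq by (rule order_trans[OF N_triangle_ineq add_mono[OF N_mult_ineq N_mult_mpow_le]])
  also have "\<dots> \<le> r * (Suc k * r ^ k * N (X - Y)) + N (X - Y) * r ^ Suc k"
    using Suc assms N_ge_zero order_trans[OF N_ge_zero assms(1)]
    by (intro add_mono mult_mono mult_left_mono power_mono) auto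
  also have "\<dots> = Suc (Suc k) * r ^ Suc k * N (X - Y)" by (simp add: algebra_simps)
  finally show ?case .
qed simp

lemma N_mexp_term_le: "N ((1 / fact k) *\<^sub>R mpow X k) \<le> N (mat 1) * (N X ^ k / fact k)"
  using N_mpow_le[of X k] by (simp add: N_scaleR divide_right_mono)

lemma mexp_summable:
  fixes X :: "'q cmat"
  shows "summable (\<lambda>k. (1 / fact k) *\<^sub>R mpow X k)"
proof -
  obtain C where C: "C > 0" "\<forall>X. norm X \<le> C * N X" using N_dominates_norm by blast
  have "summable (\<lambda>k. C * (N (mat 1) * (N X ^ k / fact k)))"
    using exp_sums_real[of "N X"] by (intro summable_mult) (simp add: sums_summable)
  then show ?thesis
  proof (rule summable_comparison_test')
    fix k
    show "norm ((1 / fact k) *\<^sub>R mpow X k) \<le> C * (N (mat 1) * (N X ^ k / fact k))"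
      using C N_mexp_term_le[of k X] by (meson less_imp_le mult_left_mono order_trans)
  qed
qed

lemma mexp_partial_LIMSEQ:
  fixes X :: "'q cmat"
  shows "mexp_partial X \<longlonglongrightarrow> mexp X"
  unfolding mexp_partial_def mexp_def by (rule summable_LIMSEQ[OF mexp_summable])

text \<open>The linear part of \<open>mexp X - mexp Y\<close> is \<open>X - Y\<close>; the rest of the series is at most
  \<open>r e\<^sup>r N (X - Y)\<close>.\<close>

lemma N_diff_le_N_mexp_diff:
  fixes r :: real
  assumes "N X \<le> r" "N Y \<le> r"
  shows "N (X - Y) * (1 - r * exp r) \<le> N (mexp X - mexp Y)"
proof -
  have r0: "0 \<le> r" using assms N_ge_zero[of X] by linarith
  define d where "d k = (1 / fact k) *\<^sub>R (mpow X k - mpow Y k)" for k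
  have d: "summable d" unfolding d_def scaleR_diff_right by (intro summable_diff mexp_summable)
  have "mexp X - mexp Y = suminf d"
    unfolding mexp_def d_def scaleR_diff_right by (intro suminf_diff mexp_summable)
  also have "\<dots> = (\<Sum>k. d (k + 2)) + (X - Y)"
    using suminf_split_initial_segment[OF d, of 2] by (simp add: d_def numeral_2_eq_2)
  finally have eq: "mexp X - mexp Y = (\<Sum>k. d (k + 2)) + (X - Y)" .
  have "N (\<Sum>k. d (k + 2)) \<le> (\<Sum>k. r * N (X - Y) * (r ^ k / fact k))"
  proof (rule N_suminf_le)
    show "summable (\<lambda>k. d (k + 2))" using d by (subst summable_iff_shift)
    show "summable (\<lambda>k. r * N (X - Y) * (r ^ k / fact k))"
      using exp_sums_real[of r] by (intro summable_mult) (simp add: sums_summable)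
    fix k
    have "N (d (k + 2)) = N (mpow X (Suc (Suc k)) - mpow Y (Suc (Suc k))) / fact (Suc (Suc k))"
      by (simp add: d_def N_scaleR numeral_2_eq_2 del: mpow.simps)
    also have "\<dots> \<le> (Suc (Suc k) * r ^ Suc k * N (X - Y)) / fact (Suc (Suc k))"
      by (intro divide_right_mono N_mpow_diff_le assms) auto
    also have "\<dots> = r ^ Suc k * N (X - Y) / fact (Suc k)"
      by (simp add: field_simps del: of_nat_Suc)
    also have "\<dots> \<le> r ^ Suc k * N (X - Y) / fact k"
      using r0 N_ge_zero[of "X - Y"] by (intro divide_left_mono) (auto simp: fact_mono)
    finally show "N (d (k + 2)) \<le> r * N (X - Y) * (r ^ k / fact k)" by (simp add: mult_ac)
  qed
  also have "\<dots> = r * N (X - Y) * exp r"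
    using sums_unique[OF sums_mult[OF exp_sums_real[of r]]] by simp
  finally have "N (\<Sum>k. d (k + 2)) \<le> r * N (X - Y) * exp r" .
  moreover have "N (X - Y) - N (\<Sum>k. d (k + 2)) \<le> N (mexp X - mexp Y)"
    using N_triangle_ineq2[of "X - Y" "- (\<Sum>k. d (k + 2))"] by (simp add: eq N_minus_cancel add.commute)
  ultimately show ?thesis by (simp add: algebra_simps)
qed

lemma N_mbracket_le: "N (mbracket X Y) \<le> ad_norm N * N X * N Y"
  and ad_norm_nonneg: "0 \<le> ad_norm N"
  and ad_norm_le_2: "ad_norm N \<le> 2"
proof -
  define S where "S = {N (mbracket X Y) | X Y. N X = 1 \<and> N Y = 1}"
  have S_le_2: "x \<le> 2" if x: "x \<in> S" for x
  proof -
    obtain X Y where "x = N (X ** Y - Y ** X)" "N X = 1" "N Y = 1"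
      using x unfolding S_def mbracket_def by blast
    then show ?thesis
      using N_diff_triangle_ineq[of "X ** Y" "Y ** X"] N_mult_ineq[of X Y] N_mult_ineq[of Y X] by simp
  qed
  then have bdd: "bdd_above S" by (rule bdd_aboveI)
  define I where "I = (1 / N (mat 1)) *\<^sub>R (mat 1 :: 'q cmat)"
  have "N I = 1" using N_pos[OF mat_1_neq_0] by (simp add: I_def N_scaleR)
  then have "0 \<in> S" unfolding S_def mbracket_def by force
  then show ad0: "0 \<le> ad_norm N" and "ad_norm N \<le> 2"
    unfolding ad_norm_def S_def[symmetric] using bdd S_le_2 by (auto intro: cSup_upper cSup_least)
  show "N (mbracket X Y) \<le> ad_norm N * N X * N Y"
  proof (cases "X = 0 \<or> Y = 0")
    case True then show ?thesis using ad0 by (auto simp: mbracket_def)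
  next
    case False
    then have pos: "0 < N X" "0 < N Y" using N_pos by auto
    have "mbracket ((1 / N X) *\<^sub>R X) ((1 / N Y) *\<^sub>R Y) = (1 / (N X * N Y)) *\<^sub>R mbracket X Y"
      by (simp add: mbracket_def matrix_scaleR_mul_left matrix_scaleR_mul_right scaleR_diff_right mult.commute)
    moreover have "N (mbracket ((1 / N X) *\<^sub>R X) ((1 / N Y) *\<^sub>R Y)) \<in> S"
      using pos unfolding S_def by (force simp: N_scaleR)
    ultimately have "N (mbracket X Y) / (N X * N Y) \<le> ad_norm N"
      unfolding ad_norm_def S_def[symmetric] using bdd pos by (auto simp: N_scaleR dest: cSup_upper)
    then show ?thesis using pos by (simp add: field_simps)
  qed
qed

end

text \<open>\<open>mpow_deriv X D k\<close> is the derivative of \<open>Y \<mapsto> Y\<^sup>k\<close> at \<open>X\<close> in direction \<open>D\<close>.\<close>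

fun mpow_deriv :: "'q::finite cmat \<Rightarrow> 'q cmat \<Rightarrow> nat \<Rightarrow> 'q cmat" where
  "mpow_deriv X D 0 = 0"
| "mpow_deriv X D (Suc k) = D ** mpow X k + X ** mpow_deriv X D k"

lemma has_vector_derivative_mpow:
  fixes P :: "real \<Rightarrow> 'q::finite cmat"
  assumes "(P has_vector_derivative D) (at x within S)"
  shows "((\<lambda>v. mpow (P v) k) has_vector_derivative mpow_deriv (P x) D k) (at x within S)"
proof (induction k)
  case (Suc k)
  show ?case
    using bounded_bilinear.has_vector_derivative[OF bounded_bilinear_matrix_mul assms Suc]
    by (simp add: add.commute)
qed simp

definition mexp_partial_deriv :: "'q::finite cmat \<Rightarrow> 'q cmat \<Rightarrow> nat \<Rightarrow> 'q cmat" where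
  "mexp_partial_deriv X D n = (\<Sum>k<n. (1 / fact k) *\<^sub>R mpow_deriv X D k)"

lemma has_vector_derivative_mexp_partial:
  fixes P :: "real \<Rightarrow> 'q::finite cmat"
  assumes "(P has_vector_derivative D) (at x within S)"
  shows "((\<lambda>v. mexp_partial (P v) n) has_vector_derivative mexp_partial_deriv (P x) D n) (at x within S)"
  unfolding mexp_partial_deriv_def mexp_partial_def
  by (intro has_vector_derivative_sum bounded_linear.has_vector_derivative[OF bounded_linear_scaleR_right]
      has_vector_derivative_mpow assms)

lemma mexp_partial_deriv_Suc_minus:
  "mexp_partial_deriv X D (Suc n) - D ** mexp_partial X n =
    (\<Sum>j<n. (1 / fact (Suc j)) *\<^sub>R (mpow_deriv X D (Suc j) - real (Suc j) *\<^sub>R (D ** mpow X j)))"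
proof -
  have "mexp_partial_deriv X D (Suc n) = (\<Sum>j<n. (1 / fact (Suc j)) *\<^sub>R mpow_deriv X D (Suc j))"
    unfolding mexp_partial_deriv_def by (subst sum.lessThan_Suc_shift) simp
  moreover have "D ** mexp_partial X n = (\<Sum>j<n. (1 / fact (Suc j)) *\<^sub>R (real (Suc j) *\<^sub>R (D ** mpow X j)))"
    by (simp add: mexp_partial_def matrix_mul_sum_right matrix_scaleR_mul_right del: of_nat_Suc)
  ultimately show ?thesis by (simp add: sum_subtractf scaleR_diff_right)
qed

lemma sum_mult_power_fact_le: "0 \<le> (x::real) \<Longrightarrow> (\<Sum>j<n. real j * x ^ j / fact j) \<le> x * exp x"
proof (cases n)
  case (Suc n')
  assume x: "0 \<le> x"
  have "(\<Sum>j<Suc n'. real j * x ^ j / fact j) = x * (\<Sum>i<n'. x ^ i / fact i)"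
    by (subst sum.lessThan_Suc_shift) (simp add: sum_distrib_left field_simps del: of_nat_Suc)
  also have "\<dots> \<le> x * exp x" using x by (simp add: mult_left_mono sum_power_fact_le_exp)
  finally show ?thesis using Suc by simp
qed simp

context algebra_norm
begin

text \<open>Moving \<open>D\<close> to the front of each product costs one commutator \<open>[X, D]\<close> per factor.\<close>

lemma N_mpow_deriv_minus_le:
  "N (mpow_deriv X D (Suc j) - real (Suc j) *\<^sub>R (D ** mpow X j))
    \<le> real j * (real j + 1) / 2 * ad_norm N * N D * N X ^ j"
proof (induction j)
  case (Suc j)
  have eq: "mpow_deriv X D (Suc (Suc j)) - real (Suc (Suc j)) *\<^sub>R (D ** mpow X (Suc j)) =
      X ** (mpow_deriv X D (Suc j) - real (Suc j) *\<^sub>R (D ** mpow X j))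
      + real (Suc j) *\<^sub>R (mbracket X D ** mpow X j)"
    by (simp add: mbracket_def matrix_diff_ldistrib matrix_diff_rdistrib matrix_add_ldistrib
        matrix_scaleR_mul_left matrix_scaleR_mul_right matrix_mul_assoc algebra_simps numeral_mult_cmat)
  have "N (mpow_deriv X D (Suc (Suc j)) - real (Suc (Suc j)) *\<^sub>R (D ** mpow X (Suc j))) \<le>
      N X * N (mpow_deriv X D (Suc j) - real (Suc j) *\<^sub>R (D ** mpow X j))
      + real (Suc j) * (N (mbracket X D) * N X ^ j)"
    unfolding eq by (rule order_trans[OF N_triangle_ineq add_mono[OF N_mult_ineq]])
      (simp add: N_scaleR N_mult_mpow_le mult_left_mono del: of_nat_Suc)
  also have "\<dots> \<le> N X * (real j * (real j + 1) / 2 * ad_norm N * N D * N X ^ j)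
      + real (Suc j) * (ad_norm N * N X * N D * N X ^ j)"
    using Suc N_mbracket_le N_ge_zero ad_norm_nonneg
    by (intro add_mono mult_left_mono mult_right_mono) (auto simp del: of_nat_Suc)
  also have "\<dots> = real (Suc j) * (real (Suc j) + 1) / 2 * ad_norm N * N D * N X ^ Suc j"
    by (simp add: field_simps del: of_nat_Suc) (simp add: algebra_simps)
  finally show ?case .
qed simp

lemma N_mexp_partial_deriv_minus_le:
  "N (mexp_partial_deriv X D (Suc n) - D ** mexp_partial X n)
    \<le> ad_norm N * N D * (N X * exp (N X)) / 2"
proof -
  have "N (mexp_partial_deriv X D (Suc n) - D ** mexp_partial X n)
      \<le> (\<Sum>j<n. (1 / fact (Suc j)) * (real j * (real j + 1) / 2 * ad_norm N * N D * N X ^ j))"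
    unfolding mexp_partial_deriv_Suc_minus
  proof (rule order_trans[OF N_sum_le sum_mono])
    fix j
    show "N ((1 / fact (Suc j)) *\<^sub>R (mpow_deriv X D (Suc j) - real (Suc j) *\<^sub>R (D ** mpow X j)))
        \<le> 1 / fact (Suc j) * (real j * (real j + 1) / 2 * ad_norm N * N D * N X ^ j)"
      using mult_left_mono[OF N_mpow_deriv_minus_le[of X D j], of "1 / fact (Suc j)"]
      by (simp add: N_scaleR del: mpow_deriv.simps of_nat_Suc)
  qed
  also have "\<dots> = ad_norm N * N D / 2 * (\<Sum>j<n. real j * N X ^ j / fact j)"
    unfolding sum_distrib_left by (rule sum.cong) (simp_all add: divide_simps)
  also have "\<dots> \<le> ad_norm N * N D / 2 * (N X * exp (N X))"
    using ad_norm_nonneg N_ge_zero by (intro mult_left_mono sum_mult_power_fact_le) auto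
  finally show ?thesis by simp
qed

lemma N_mult_minus_mexp_partial_deriv_le:
  "N (D ** Y - mexp_partial_deriv X D (Suc n))
    \<le> N D * N (Y - mexp_partial X (Suc n)) + N D * (N X ^ n / fact n)
      + ad_norm N * N D * (N X * exp (N X)) / 2"
proof -
  define R where "R = mexp_partial_deriv X D (Suc n) - D ** mexp_partial X n"
  have "D ** Y - mexp_partial_deriv X D (Suc n) =
      D ** (Y - mexp_partial X (Suc n)) + (1 / fact n) *\<^sub>R (D ** mpow X n) - R"
    by (simp add: R_def mexp_partial_def matrix_diff_ldistrib matrix_add_ldistrib matrix_scaleR_mul_right)
  then have "N (D ** Y - mexp_partial_deriv X D (Suc n))
      \<le> N (D ** (Y - mexp_partial X (Suc n)) + (1 / fact n) *\<^sub>R (D ** mpow X n)) + N R"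
    by (simp only: N_diff_triangle_ineq)
  also have "\<dots> \<le> N (D ** (Y - mexp_partial X (Suc n))) + N ((1 / fact n) *\<^sub>R (D ** mpow X n)) + N R"
    using N_triangle_ineq by (rule add_right_mono)
  moreover have "N ((1 / fact n) *\<^sub>R (D ** mpow X n)) \<le> N D * (N X ^ n / fact n)"
    using N_mult_mpow_le[of D X n] by (simp add: N_scaleR divide_right_mono)
  ultimately show ?thesis
    using N_mexp_partial_deriv_minus_le[of X D n] N_mult_ineq[of D "Y - mexp_partial X (Suc n)"]
    unfolding R_def by linarith
qed

lemma N_integral_le:
  assumes "0 \<le> t" "continuous_on {0..t} A" "\<And>s. s \<in> {0..t} \<Longrightarrow> N (A s) \<le> m"
  shows "N (integral {0..t} A) \<le> t * m"
proof -
  have "N (integral {0..t} A - integral {0..0} A) \<le> m * t - m * 0"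
    by (rule N_increment_le[where f' = A and G' = "\<lambda>_. m"])
      (use assms in \<open>auto intro!: integral_has_vector_derivative derivative_eq_intros\<close>)
  then show ?thesis by (simp add: mult.commute)
qed

lemma N_le_Linf:
  assumes "continuous_on {0..t} A" "s \<in> {0..t}"
  shows "N (A s) \<le> Linf N A t"
proof -
  have "continuous_on {0..t} (\<lambda>s. N (A s))"
    using continuous_on_compose2[OF N_continuous_on assms(1)] by auto
  then have "bdd_above ((\<lambda>s. N (A s)) ` {0..t})"
    by (intro bounded_imp_bdd_above compact_imp_bounded compact_continuous_image) auto
  then show ?thesis unfolding Linf_def using assms(2) by (rule cSUP_upper2) simp
qed

end

locale matrix_flow = algebra_norm N for N :: "'q::finite cmat \<Rightarrow> real" +
  fixes T :: real and A a :: "real \<Rightarrow> 'q cmat"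
  assumes continuous_on_A: "continuous_on {0..T} A"
    and flow_derivative: "\<And>s. s \<in> {0..T} \<Longrightarrow> (a has_vector_derivative A s ** a s) (at s within {0..T})"
    and flow_0: "a 0 = mat 1"
begin

text \<open>A Gronwall-type estimate, run on the supremum \<open>W\<close> of the error instead of the error itself:
  the increment inequality yields \<open>W \<le> p W + \<dots>\<close> with \<open>p = t m < 1\<close>.\<close>

lemma N_flow_minus_mexp_partial_le:
  assumes t: "t \<in> {0..T}" and m: "\<And>s. s \<in> {0..t} \<Longrightarrow> N (A s) \<le> m" and p: "t * m < 1"
  shows "N (a t - mexp_partial (integral {0..t} A) (Suc n))
    \<le> (t * m * ((t * m) ^ n / fact n) + ad_norm N * exp (t * m) * (t * m)\<^sup>2 / 4) / (1 - t * m)"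
proof -
  define P where "P v = integral {0..v} A" for v
  define p where "p = t * m"
  define ad where "ad = ad_norm N"
  define f where "f v = a v - mexp_partial (P v) (Suc n)" for v
  define f' where "f' v = A v ** a v - mexp_partial_deriv (P v) (A v) (Suc n)" for v
  have sub: "{0..t} \<subseteq> {0..T}" using t by auto
  have contA: "continuous_on {0..t} A" using continuous_on_subset[OF continuous_on_A sub] .
  have m0: "0 \<le> m" using m[of 0] t N_ge_zero[of "A 0"] by auto
  then have p0: "0 \<le> p" using t by (simp add: p_def)
  have NP: "N (P v) \<le> v * m" "N (P v) \<le> p" if "v \<in> {0..t}" for v
  proof -
    show "N (P v) \<le> v * m"
      unfolding P_def using that m continuous_on_subset[OF contA] by (intro N_integral_le) auto
    then show "N (P v) \<le> p" unfolding p_def using that m0 by (meson atLeastAtMost_iff mult_right_mono order_trans)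
  qed
  have df: "(f has_vector_derivative f' v) (at v within {0..t})" if v: "v \<in> {0..t}" for v
  proof -
    have "(a has_vector_derivative A v ** a v) (at v within {0..t})"
      using flow_derivative[of v] v sub by (auto intro: has_vector_derivative_within_subset)
    then show ?thesis
      unfolding f_def f'_def P_def using integral_has_vector_derivative[OF contA v]
      by (auto intro!: has_vector_derivative_diff has_vector_derivative_mexp_partial)
  qed
  have "continuous_on {0..t} (\<lambda>v. N (f v))"
    using continuous_on_compose2[OF N_continuous_on, of "{0..t}" f]
      continuous_on_eq_continuous_within has_vector_derivative_continuous[OF df] by blast
  then have bdd: "bdd_above ((\<lambda>v. N (f v)) ` {0..t})"
    by (intro bounded_imp_bdd_above compact_imp_bounded compact_continuous_image) auto
  define W where "W = (SUP v\<in>{0..t}. N (f v))"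
  have fW: "N (f v) \<le> W" if "v \<in> {0..t}" for v unfolding W_def using bdd that by (rule cSUP_upper2) simp
  have W0: "0 \<le> W" using fW[of 0] t N_ge_zero[of "f 0"] by auto
  define G where "G v = (m * W + m * (p ^ n / fact n)) * v + ad * m\<^sup>2 * exp p * v\<^sup>2 / 4" for v
  define G' where "G' v = m * W + m * (p ^ n / fact n) + ad * m\<^sup>2 * exp p * v / 2" for v
  have f'G': "N (f' v) \<le> G' v" if v: "v \<in> {0..t}" for v
  proof -
    have "N (f' v) \<le> N (A v) * N (f v) + N (A v) * (N (P v) ^ n / fact n)
        + ad * N (A v) * (N (P v) * exp (N (P v))) / 2"
      unfolding f'_def f_def ad_def by (rule N_mult_minus_mexp_partial_deriv_le)
    also have "\<dots> \<le> m * W + m * (p ^ n / fact n) + ad * m * (v * m * exp p) / 2"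
      using m[OF v] fW[OF v] NP[OF v] N_ge_zero m0 ad_norm_nonneg v unfolding ad_def
      by (intro add_mono mult_mono divide_right_mono power_mono mult_left_mono) auto
    finally show ?thesis by (simp add: G'_def power2_eq_square mult_ac)
  qed
  have "N (f u) \<le> G t" if u: "u \<in> {0..t}" for u
  proof -
    have "N (f u - f 0) \<le> G u - G 0"
      using u f'G' by (intro N_increment_le[where f' = f' and G' = G'])
        (auto intro!: has_vector_derivative_within_subset[OF df] derivative_eq_intros
          simp: G_def G'_def power2_eq_square)
    moreover have "f 0 = 0"
      by (simp add: f_def P_def flow_0 mexp_partial_def sum.lessThan_Suc_shift del: sum.lessThan_Suc)
    moreover have "G u \<le> G t"
      unfolding G_def using u m0 W0 p0 ad_norm_nonneg exp_ge_zero unfolding ad_def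
      by (intro add_mono mult_left_mono divide_right_mono power_mono mult_nonneg_nonneg) auto
    ultimately show ?thesis by (simp add: G_def)
  qed
  then have "W \<le> G t" unfolding W_def using t by (intro cSUP_least) auto
  also have "G t = p * W + p * (p ^ n / fact n) + ad * exp p * p\<^sup>2 / 4"
    by (simp add: G_def p_def algebra_simps power2_eq_square)
  finally have "W \<le> (p * (p ^ n / fact n) + ad * exp p * p\<^sup>2 / 4) / (1 - p)"
    using p by (simp add: p_def field_simps)
  with fW[of t] t show ?thesis by (simp add: f_def P_def p_def ad_def)
qed

lemma N_flow_minus_mexp_integral_le:
  assumes t: "t \<in> {0..T}" and m: "\<And>s. s \<in> {0..t} \<Longrightarrow> N (A s) \<le> m" and p: "t * m < 1"
  shows "N (a t - mexp (integral {0..t} A)) \<le> ad_norm N * exp (t * m) * (t * m)\<^sup>2 / 4 / (1 - t * m)"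
proof -
  define p where "p = t * m"
  have "(\<lambda>n. N (a t - mexp_partial (integral {0..t} A) (Suc n))) \<longlonglongrightarrow> N (a t - mexp (integral {0..t} A))"
    using continuous_on_tendsto_compose[OF N_continuous_on
        tendsto_diff[OF tendsto_const LIMSEQ_Suc[OF mexp_partial_LIMSEQ]]] by simp
  moreover have "(\<lambda>n. (p * (p ^ n / fact n) + ad_norm N * exp p * p\<^sup>2 / 4) / (1 - p))
      \<longlonglongrightarrow> (p * 0 + ad_norm N * exp p * p\<^sup>2 / 4) / (1 - p)"
    using summable_LIMSEQ_zero[OF sums_summable[OF exp_sums_real[of p]]] p
    by (intro tendsto_intros) (auto simp: p_def)
  ultimately show ?thesis
    using N_flow_minus_mexp_partial_le[OF t m p] unfolding p_def
    by (intro tendsto_le[OF trivial_limit_sequentially]) auto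
qed

end

locale matrix_flow_log = matrix_flow +
  fixes Q :: "real \<Rightarrow> 'q::finite cmat"
  assumes continuous_on_Q: "continuous_on {0..T} Q"
    and log_0: "Q 0 = 0"
    and mexp_log: "\<And>s. s \<in> {0..T} \<Longrightarrow> mexp (Q s) = a s"
begin

lemma N_log_minus_integral_le_if_small:
  assumes t: "t \<in> {0..T}" and m: "\<And>s. s \<in> {0..t} \<Longrightarrow> N (A s) \<le> m"
    and p: "t * m \<le> 1/100" and Q: "N (Q t) \<le> 1/20"
  shows "N (Q t - integral {0..t} A) \<le> 3/10 * (ad_norm N * (t * m)\<^sup>2)"
proof -
  define p where "p = t * m"
  define K where "K = ad_norm N * p\<^sup>2"
  have "0 \<le> m" using m[of 0] t N_ge_zero[of "A 0"] by auto
  then have p0: "0 \<le> p" using t by (simp add: p_def)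
  have K0: "0 \<le> K" using ad_norm_nonneg by (simp add: K_def)
  have "N (integral {0..t} A) \<le> 1/20"
    using N_integral_le[OF _ continuous_on_subset[OF continuous_on_A], of t m] t m p by auto
  then have "N (Q t - integral {0..t} A) * (1 - 1/20 * exp (1/20)) \<le> N (a t - mexp (integral {0..t} A))"
    using N_diff_le_N_mexp_diff[OF Q] mexp_log[OF t] by simp
  moreover have "exp (1/20::real) \<le> 11/10" "exp p \<le> 51/50"
    using exp_bound_lemma[of "1/20::real"] exp_bound_lemma[of p] p p0 by (auto simp: p_def)
  then have "N (Q t - integral {0..t} A) * (189/200) \<le> N (Q t - integral {0..t} A) * (1 - 1/20 * exp (1/20))"
    using N_ge_zero by (intro mult_left_mono) auto
  moreover have "N (a t - mexp (integral {0..t} A)) \<le> K * (exp p / (4 * (1 - p)))"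
    using N_flow_minus_mexp_integral_le[OF t m] p by (simp add: p_def K_def mult_ac)
  moreover have "exp p / (4 * (1 - p)) \<le> (51/50) / (4 * (99/100))"
    using \<open>exp p \<le> 51/50\<close> p p0 by (intro frac_le) (auto simp: p_def)
  then have "K * (exp p / (4 * (1 - p))) \<le> K * (51/198)" using K0 by (intro mult_left_mono) auto
  ultimately have "N (Q t - integral {0..t} A) * (189/200) \<le> K * (51/198)" by linarith
  then show ?thesis using K0 by (simp add: K_def p_def)
qed

text \<open>Continuity argument: on the sphere \<open>N (Q u) = 1/20\<close> the previous lemma forces
  \<open>N (Q u) < 1/20\<close>, so \<open>N \<circ> Q\<close>, starting at \<open>0\<close>, can never cross \<open>1/20\<close>.\<close>

lemma N_log_le:
  assumes t: "t \<in> {0..T}" and m: "\<And>s. s \<in> {0..t} \<Longrightarrow> N (A s) \<le> m" and p: "t * m \<le> 1/100"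
  shows "N (Q t) \<le> 1/20"
proof (rule ccontr)
  have m0: "0 \<le> m" using m[of 0] t N_ge_zero[of "A 0"] by auto
  have not_on_sphere: "N (Q u) \<noteq> 1/20" if u: "u \<in> {0..t}" for u
  proof
    assume Qu: "N (Q u) = 1/20"
    have uT: "u \<in> {0..T}" and mu: "\<And>s. s \<in> {0..u} \<Longrightarrow> N (A s) \<le> m" using t u m by auto
    have pu: "u * m \<le> 1/100" using p u m0 by (meson atLeastAtMost_iff mult_right_mono order_trans)
    have "(u * m)\<^sup>2 \<le> (1/100)\<^sup>2" using pu u m0 by (intro power_mono) auto
    then have "ad_norm N * (u * m)\<^sup>2 \<le> 2 * (1/10000)"
      using ad_norm_le_2 by (intro mult_mono) (auto simp: power_divide)
    then have "N (Q u - integral {0..u} A) \<le> 3/10 * (2 * (1/10000))"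
      using N_log_minus_integral_le_if_small[OF uT mu pu] Qu by linarith
    moreover have "N (integral {0..u} A) \<le> 1/100"
      using N_integral_le[OF _ continuous_on_subset[OF continuous_on_A], of u m] uT mu pu by auto
    ultimately show False
      using Qu N_triangle_ineq[of "integral {0..u} A" "Q u - integral {0..u} A"] by simp
  qed
  assume "\<not> N (Q t) \<le> 1/20"
  moreover have "continuous_on {0..t} (\<lambda>v. N (Q v))"
    using t continuous_on_compose2[OF N_continuous_on continuous_on_subset[OF continuous_on_Q]] by auto
  ultimately obtain u where "u \<in> {0..t}" "N (Q u) = 1/20"
    using IVT'[of "\<lambda>v. N (Q v)" 0 "1/20" t] t by (auto simp: log_0)
  then show False using not_on_sphere by blast
qed

lemma N_log_minus_integral_le:
  assumes "t \<in> {0..T}" "\<And>s. s \<in> {0..t} \<Longrightarrow> N (A s) \<le> m" "t * m \<le> 1/100"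
  shows "N (Q t - integral {0..t} A) \<le> 3/10 * (ad_norm N * (t * m)\<^sup>2)"
  using N_log_minus_integral_le_if_small[OF assms N_log_le[OF assms]] .

end

lemma exp_pi_ge_10: "10 \<le> exp pi"
proof -
  have "157/50 \<le> pi" using pi_approx(1) by simp
  then have "(357/200::real) \<le> exp (pi / 4)" using exp_ge_add_one_self[of "pi / 4"] by linarith
  then have "(357/200::real) ^ 4 \<le> exp (pi / 4) ^ 4" by (rule power_mono) simp
  moreover have "exp (pi / 4) ^ 4 = exp pi" using exp_of_nat_mult[of 4 "pi / 4"] by simp
  moreover have "(10::real) \<le> (357/200) ^ 4" by (simp add: power_divide)
  ultimately show ?thesis by linarith
qed

text \<open>\<open>g'(0) = 1/2\<close> is too small for the final constant; at \<open>z = \<pi>\<close> one has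
  \<open>g'(\<pi>) = (1 - e\<^sup>-\<^sup>\<pi> - \<pi> e\<^sup>-\<^sup>\<pi>) / (1 - e\<^sup>-\<^sup>\<pi>)\<^sup>2 \<ge> 11/20\<close>.\<close>

lemma deriv_gfun_bound_ge:
  assumes "\<forall>z. cmod z \<le> pi \<longrightarrow> cmod (deriv gfun z) \<le> B2"
  shows "11/20 \<le> B2"
proof -
  define e where "e = exp (- pi)"
  define d where "d = ((1 - e) - pi * e) / (1 - e)\<^sup>2"
  have e: "0 < e" "e \<le> 1/10" using exp_pi_ge_10 by (auto simp: e_def exp_minus field_simps)
  have exp_pi: "exp (- complex_of_real pi) = complex_of_real e" by (simp only: e_def of_real_minus[symmetric] exp_of_real)
  have "((\<lambda>z. z / (1 - exp (- z))) has_field_derivative complex_of_real d) (at (complex_of_real pi))"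
    using e by (auto intro!: derivative_eq_intros simp: exp_pi d_def power2_eq_square)
  then have "(gfun has_field_derivative complex_of_real d) (at (complex_of_real pi))"
    by (rule has_field_derivative_transform_within_open[of _ _ _ "- {0}"]) (auto simp: gfun_def)
  then have "deriv gfun (complex_of_real pi) = complex_of_real d" by (rule DERIV_imp_deriv)
  then have "\<bar>d\<bar> \<le> B2" using assms[rule_format, of "complex_of_real pi"] by simp
  moreover have "11/20 \<le> (1 - e) - pi * e"
    using e pi_approx mult_mono[of pi "63/20" e "1/10"] by auto
  moreover have "0 < (1 - e)\<^sup>2" "(1 - e)\<^sup>2 \<le> 1" using e by (auto simp: power_le_one)
  then have "(1 - e) - pi * e \<le> d" using calculation(2) by (simp add: d_def le_divide_eq)
  ultimately show ?thesis by linarith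
qed

theorem lemmaA1:
  fixes L :: "'q::finite cmat set" and N :: "'q cmat \<Rightarrow> real" and B1 B2 :: real
  assumes "lie_subalgebra L"
    and "banach_algebra_norm N"
    and "\<forall>z. cmod z \<le> pi \<longrightarrow> cmod (gfun z) \<le> B1"
    and "\<forall>z. cmod z \<le> pi \<longrightarrow> cmod (deriv gfun z) \<le> B2"
  shows "\<exists>\<epsilon>>0. \<forall>(T::real) (A::real \<Rightarrow> 'q cmat) (a::real \<Rightarrow> 'q cmat) (Q::real \<Rightarrow> 'q cmat) (t::real).
           continuous_on {0..T} A \<and> (\<forall>s\<in>{0..T}. A s \<in> L) \<and>
           a 0 = mat 1 \<and>
           (\<forall>s\<in>{0..T}. (a has_vector_derivative (A s ** a s)) (at s within {0..T})) \<and>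
           continuous_on {0..T} Q \<and> (\<forall>s\<in>{0..T}. Q s \<in> L) \<and> Q 0 = 0 \<and>
           (\<forall>s\<in>{0..T}. mexp (Q s) = a s) \<and>
           t \<in> {0..T} \<and> t * Linf N A t < \<epsilon>
           \<longrightarrow> N (Q t - integral {0..t} A)
               \<le> ad_norm N * t\<^sup>2 * B2\<^sup>2 / (1 - ad_norm N * B2 * \<epsilon>) * (Linf N A t)\<^sup>2"
proof -
  interpret algebra_norm N by unfold_locales (fact assms(2))
  have B2: "11/20 \<le> B2" by (rule deriv_gfun_bound_ge[OF assms(4)])
  define \<epsilon> where "\<epsilon> = 1 / (100 * (1 + B2))"
  have \<epsilon>: "0 < \<epsilon>" "\<epsilon> \<le> 1/100" "B2 * \<epsilon> \<le> 1/100" using B2 by (auto simp: \<epsilon>_def field_simps)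
  then have "ad_norm N * (B2 * \<epsilon>) \<le> 2 * (1/100)"
    using B2 ad_norm_nonneg ad_norm_le_2 by (intro mult_mono) auto
  moreover have "0 \<le> ad_norm N * (B2 * \<epsilon>)" using B2 \<epsilon> ad_norm_nonneg by simp
  ultimately have den: "0 < 1 - ad_norm N * B2 * \<epsilon>" "1 - ad_norm N * B2 * \<epsilon> \<le> 1"
    by (simp_all add: mult.assoc)
  have "3/10 \<le> B2\<^sup>2" using power_mono[OF B2, of 2] by (simp add: power_divide)
  also have "\<dots> \<le> B2\<^sup>2 / (1 - ad_norm N * B2 * \<epsilon>)"
    using den by (simp add: le_divide_eq mult_left_le)
  finally have B2_bound: "3/10 \<le> B2\<^sup>2 / (1 - ad_norm N * B2 * \<epsilon>)" .
  have final_bound: "3/10 * (ad_norm N * (t * m)\<^sup>2)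
      \<le> ad_norm N * t\<^sup>2 * B2\<^sup>2 / (1 - ad_norm N * B2 * \<epsilon>) * m\<^sup>2" for t m
  proof -
    have "3/10 * (ad_norm N * (t * m)\<^sup>2) \<le> B2\<^sup>2 / (1 - ad_norm N * B2 * \<epsilon>) * (ad_norm N * (t * m)\<^sup>2)"
      using B2_bound ad_norm_nonneg by (intro mult_right_mono) auto
    then show ?thesis by (simp add: power_mult_distrib mult_ac)
  qed
  show ?thesis
  proof (intro exI[of _ \<epsilon>] conjI \<epsilon>(1) allI impI, elim conjE)
    fix T t :: real and A a Q :: "real \<Rightarrow> 'q cmat"
    assume "continuous_on {0..T} A" "a 0 = mat 1"
      "\<forall>s\<in>{0..T}. (a has_vector_derivative A s ** a s) (at s within {0..T})"
      "continuous_on {0..T} Q" "Q 0 = 0" "\<forall>s\<in>{0..T}. mexp (Q s) = a s"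
      and t: "t \<in> {0..T}" "t * Linf N A t < \<epsilon>"
    then interpret matrix_flow_log N T A a Q by unfold_locales auto
    have "N (Q t - integral {0..t} A) \<le> 3/10 * (ad_norm N * (t * Linf N A t)\<^sup>2)"
      using t \<epsilon> continuous_on_subset[OF continuous_on_A]
      by (intro N_log_minus_integral_le N_le_Linf) auto
    also have "\<dots> \<le> ad_norm N * t\<^sup>2 * B2\<^sup>2 / (1 - ad_norm N * B2 * \<epsilon>) * (Linf N A t)\<^sup>2"
      by (rule final_bound)
    finally show "N (Q t - integral {0..t} A)
        \<le> ad_norm N * t\<^sup>2 * B2\<^sup>2 / (1 - ad_norm N * B2 * \<epsilon>) * (Linf N A t)\<^sup>2" .
  qed
qed

end
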